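(* Let $S$ be a semiring satisfying the standing assumptions below, let $m>1$, $n>1$, and let $A,B\in M_{m\times n}(S)$ be two distinct matrices with $r(A)=r(B)=1$. (i) If $A$ has more nonzero entries than $B$, then there exists $C\in M_{m\times n}(S)$ such that $r(A+C)=1$ and $r(B+C)=2$. (ii) If $A$ and $B$ have the same number of nonzero entries, then there exists $C\in M_{m\times n}(S)$ such that either $r(A+C)=1$ and $r(B+C)=2$, or $r(A+C)=2$ and $r(B+C)=1$.
   Context: A semiring $(S,+,\cdot)$ here means: $(S,+)$ is a commutative monoid with zero $0$, $(S,\cdot)$ is a commutative monoid with identity $1$, multiplication distributes over addition, and $0$ is absorbing. Standing assumptions on $S$: $S$ is additively idempotent ($a+a=a$), multiplicatively cancellative (for every nonzero $a$, $ba=ca$ implies $b=c$), and additively unit irreducible (if $a+b$ is a unit then $a$ or $b$ is a unit). For $A\in M_{m\times n}(S)$, the rank $r(A)$ is the least positive integer $k$ such that $A=BC$ for some $B\in M_{m\times k}(S)$, $C\in M_{k\times n}(S)$; $r(0)=0$. *)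

theory Defs
  imports "Jordan_Normal_Form.Matrix"
begin

definition add_idempotent :: "'a::comm_semiring_1 itself \<Rightarrow> bool" where
  "add_idempotent _ \<longleftrightarrow> (\<forall>a::'a. a + a = a)"

definition mult_cancellative :: "'a::comm_semiring_1 itself \<Rightarrow> bool" where
  "mult_cancellative _ \<longleftrightarrow> (\<forall>a b c :: 'a. a \<noteq> 0 \<longrightarrow> b * a = c * a \<longrightarrow> b = c)"

definition add_unit_irreducible :: "'a::comm_semiring_1 itself \<Rightarrow> bool" where
  "add_unit_irreducible _ \<longleftrightarrow> (\<forall>a b :: 'a. (a + b) dvd 1 \<longrightarrow> a dvd 1 \<or> b dvd 1)"

definition mrank :: "'a::comm_semiring_1 mat \<Rightarrow> nat" where
  "mrank A = (if A = 0\<^sub>m (dim_row A) (dim_col A) then 0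
     else (LEAST k. 0 < k \<and> (\<exists>B C. B \<in> carrier_mat (dim_row A) k \<and>
                                      C \<in> carrier_mat k (dim_col A) \<and> A = B * C)))"

definition nnz :: "'a::zero mat \<Rightarrow> nat" where
  "nnz A = card {(i, j). i < dim_row A \<and> j < dim_col A \<and> A $$ (i, j) \<noteq> 0}"

end

theory Submission
  imports Defs
begin

text \<open>
  In an additively idempotent semiring a + b = b is a partial order, and with cancellation there
  are neither zero divisors nor nonzero sums equal to 0. A matrix has rank 1 iff it is a nonzero
  outer product, so all its 2 x 2 minors have equal diagonal products; a sum of two outer products
  with one minor violating this has rank 2.

  Both parts reduce to: if A + B \<noteq> B, some C gives rank (A + C) = 1 and rank (B + C) = 2.
  Indeed A + B = B forces nnz A \<le> nnz B, and A \<noteq> B excludes A + B = B together with B + A = A.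
  Pick (k,l) where a = A(k,l) is not below B(k,l). If B has a nonzero entry outside row k and
  column l, adding a at (k,l) leaves A unchanged (a + a = a) but breaks a minor of B. Otherwise
  B lives in row k or in column l, and after transposing in row k; then C fills in a row or column
  beside the support of A, possibly plus a at (k,l), so that A + C stays an outer product while
  a minor of B + C becomes non-degenerate.
\<close>

definition factorizes_through :: "'a::comm_semiring_1 mat \<Rightarrow> nat \<Rightarrow> bool" where
  "factorizes_through M k \<longleftrightarrow>
     (\<exists>P Q. P \<in> carrier_mat (dim_row M) k \<and> Q \<in> carrier_mat k (dim_col M) \<and> M = P * Q)"

lemma mrank_eq_Least:
  "M \<noteq> 0\<^sub>m (dim_row M) (dim_col M) \<Longrightarrow> mrank M = (LEAST k. 0 < k \<and> factorizes_through M k)"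
  unfolding mrank_def factorizes_through_def by simp

lemma factorizes_through_dim_col: "factorizes_through M (dim_col M)"
  unfolding factorizes_through_def by (intro exI[of _ M] exI[of _ "1\<^sub>m (dim_col M)"]) auto

lemma index_mult_mat_width_1:
  fixes P Q :: "'a::comm_semiring_1 mat"
  assumes "P \<in> carrier_mat m 1" "Q \<in> carrier_mat 1 n" "i < m" "j < n"
  shows "(P * Q) $$ (i,j) = P $$ (i,0) * Q $$ (0,j)"
  using assms by (simp add: scalar_prod_def)

lemma factorizes_through_1_iff:
  fixes M :: "'a::comm_semiring_1 mat"
  assumes M: "M \<in> carrier_mat m n"
  shows "factorizes_through M 1 \<longleftrightarrow> (\<exists>x y. \<forall>i<m. \<forall>j<n. M $$ (i,j) = x i * y j)"
proof
  assume "factorizes_through M 1"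
  then obtain P Q where P: "P \<in> carrier_mat m 1" and Q: "Q \<in> carrier_mat 1 n" and "M = P * Q"
    using M unfolding factorizes_through_def by auto
  then have "\<forall>i<m. \<forall>j<n. M $$ (i,j) = P $$ (i,0) * Q $$ (0,j)"
    using index_mult_mat_width_1[OF P Q] by blast
  then show "\<exists>x y. \<forall>i<m. \<forall>j<n. M $$ (i,j) = x i * y j" by (intro exI)
next
  assume "\<exists>x y. \<forall>i<m. \<forall>j<n. M $$ (i,j) = x i * y j"
  then obtain x y where xy: "\<forall>i<m. \<forall>j<n. M $$ (i,j) = x i * y j" by blast
  let ?P = "mat m 1 (\<lambda>(i,_). x i)" and ?Q = "mat 1 n (\<lambda>(_,j). y j)"
  have "M = ?P * ?Q"
    using M xy by (intro eq_matI) (auto simp: scalar_prod_def)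
  then show "factorizes_through M 1"
    using M unfolding factorizes_through_def by (intro exI[of _ ?P] exI[of _ ?Q]) auto
qed

lemma mrank_factorizes_through:
  assumes "M \<noteq> 0\<^sub>m (dim_row M) (dim_col M)"
  shows "0 < mrank M \<and> factorizes_through M (mrank M)"
proof -
  have "dim_col M \<noteq> 0"
  proof
    assume "dim_col M = 0"
    then have "M = 0\<^sub>m (dim_row M) (dim_col M)" by (intro eq_matI) auto
    with assms show False ..
  qed
  then have "0 < dim_col M \<and> factorizes_through M (dim_col M)"
    by (simp add: factorizes_through_dim_col)
  then show ?thesis
    unfolding mrank_eq_Least[OF assms] by (rule LeastI)
qed

lemma mrank_le:
  "M \<noteq> 0\<^sub>m (dim_row M) (dim_col M) \<Longrightarrow> 0 < k \<Longrightarrow> factorizes_through M k \<Longrightarrow> mrank M \<le> k"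
  by (simp add: mrank_eq_Least Least_le)

lemma mrank_eq_1_iff:
  fixes M :: "'a::comm_semiring_1 mat"
  assumes "M \<in> carrier_mat m n"
  shows "mrank M = 1 \<longleftrightarrow>
           M \<noteq> 0\<^sub>m m n \<and> (\<exists>x y. \<forall>i<m. \<forall>j<n. M $$ (i,j) = x i * y j)"
proof -
  have dims: "dim_row M = m" "dim_col M = n" using assms by auto
  have "mrank M = 1 \<longleftrightarrow> M \<noteq> 0\<^sub>m m n \<and> factorizes_through M 1"
  proof (cases "M = 0\<^sub>m m n")
    case False
    then have pos: "0 < mrank M" and fac: "factorizes_through M (mrank M)"
      using mrank_factorizes_through[of M] by (simp_all add: dims)
    show ?thesis
    proof
      assume "mrank M = 1"
      with False fac show "M \<noteq> 0\<^sub>m m n \<and> factorizes_through M 1" by simp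
    next
      assume "M \<noteq> 0\<^sub>m m n \<and> factorizes_through M 1"
      then have "mrank M \<le> 1" using mrank_le[of M 1] by (simp add: dims)
      with pos show "mrank M = 1" by simp
    qed
  qed (simp add: mrank_def dims)
  then show ?thesis unfolding factorizes_through_1_iff[OF assms] .
qed

lemma mrank_eq_1I:
  fixes M :: "'a::comm_semiring_1 mat"
  assumes "M \<in> carrier_mat m n" "\<forall>i<m. \<forall>j<n. M $$ (i,j) = x i * y j"
    and "i < m" "j < n" "M $$ (i,j) \<noteq> 0"
  shows "mrank M = 1"
proof -
  have "M \<noteq> 0\<^sub>m m n" using assms(3-5) by auto
  then show ?thesis using mrank_eq_1_iff[OF assms(1)] assms(2) by blast
qed

lemma mrank_eq_1_minor:
  fixes M :: "'a::comm_semiring_1 mat"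
  assumes "M \<in> carrier_mat m n" "mrank M = 1" "i < m" "i' < m" "j < n" "j' < n"
  shows "M $$ (i,j) * M $$ (i',j') = M $$ (i,j') * M $$ (i',j)"
proof -
  obtain x y where "\<forall>i<m. \<forall>j<n. M $$ (i,j) = x i * y j"
    using mrank_eq_1_iff[OF assms(1)] assms(2) by blast
  then show ?thesis using assms(3-6) by (simp add: ac_simps)
qed

lemma mrank_eq_2I:
  fixes M :: "'a::comm_semiring_1 mat"
  assumes M: "M \<in> carrier_mat m n"
    and entries: "\<forall>i<m. \<forall>j<n. M $$ (i,j) = p i * q j + r i * s j"
    and "i < m" "i' < m" "j < n" "j' < n"
    and minor: "M $$ (i,j) * M $$ (i',j') \<noteq> M $$ (i,j') * M $$ (i',j)"
  shows "mrank M = 2"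
proof -
  have dims: "dim_row M = m" "dim_col M = n" using M by auto
  have nonzero: "M \<noteq> 0\<^sub>m m n" using assms(3-6) minor by auto
  let ?P = "mat m 2 (\<lambda>(i,t). if t = 0 then p i else r i)"
    and ?Q = "mat 2 n (\<lambda>(t,j). if t = 0 then q j else s j)"
  have "M = ?P * ?Q"
    using M entries by (intro eq_matI) (auto simp: scalar_prod_def numeral_2_eq_2)
  then have "factorizes_through M 2"
    unfolding factorizes_through_def dims by (intro exI[of _ ?P] exI[of _ ?Q]) auto
  then have "mrank M \<le> 2"
    using nonzero mrank_le[of M 2] by (simp add: dims)
  moreover have "mrank M \<noteq> 0" using nonzero mrank_factorizes_through[of M] by (simp add: dims)
  moreover have "mrank M \<noteq> 1" using mrank_eq_1_minor[OF M _ assms(3-6)] minor by blast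
  ultimately show ?thesis by linarith
qed

lemma factorizes_through_transpose:
  fixes M :: "'a::comm_semiring_1 mat"
  shows "factorizes_through M\<^sup>T k \<longleftrightarrow> factorizes_through M k"
proof -
  have "factorizes_through M\<^sup>T k" if "factorizes_through M k" for M :: "'a mat"
  proof -
    from that obtain P Q where P: "P \<in> carrier_mat (dim_row M) k"
      and Q: "Q \<in> carrier_mat k (dim_col M)" and "M = P * Q"
      unfolding factorizes_through_def by blast
    then have "M\<^sup>T = Q\<^sup>T * P\<^sup>T" by (simp add: transpose_mult)
    moreover have "Q\<^sup>T \<in> carrier_mat (dim_row (M\<^sup>T)) k"
      and "P\<^sup>T \<in> carrier_mat k (dim_col (M\<^sup>T))"
      using P Q by auto
    ultimately show ?thesis unfolding factorizes_through_def by blast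
  qed
  from this this[of "M\<^sup>T"] show ?thesis by auto
qed

lemma mrank_transpose:
  fixes M :: "'a::comm_semiring_1 mat"
  shows "mrank M\<^sup>T = mrank M"
proof (cases "M = 0\<^sub>m (dim_row M) (dim_col M)")
  case True
  then have "M\<^sup>T = 0\<^sub>m (dim_col M) (dim_row M)" by (metis zero_transpose_mat)
  with True show ?thesis by (simp add: mrank_def)
next
  case False
  then have "M\<^sup>T \<noteq> 0\<^sub>m (dim_col M) (dim_row M)"
    by (metis transpose_mat_eq zero_transpose_mat)
  with False show ?thesis by (simp add: mrank_eq_Least factorizes_through_transpose)
qed

lemma nnz_le_if_add_eq:
  fixes A B :: "'a::monoid_add mat"
  assumes A: "A \<in> carrier_mat m n" and B: "B \<in> carrier_mat m n" and "A + B = B"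
  shows "nnz A \<le> nnz B"
proof -
  have "A $$ (i,j) = 0" if "i < m" "j < n" "B $$ (i,j) = 0" for i j
    using that A B index_add_mat(1)[of i B j A] \<open>A + B = B\<close> by simp
  then have "{(i,j). i < dim_row A \<and> j < dim_col A \<and> A $$ (i,j) \<noteq> 0}
      \<subseteq> {(i,j). i < dim_row B \<and> j < dim_col B \<and> B $$ (i,j) \<noteq> 0}"
    using A B by auto
  moreover have "finite {(i,j). i < dim_row B \<and> j < dim_col B \<and> B $$ (i,j) \<noteq> 0}"
    by (rule finite_subset[of _ "{..<dim_row B} \<times> {..<dim_col B}"]) auto
  ultimately show ?thesis unfolding nnz_def by (rule card_mono[rotated])
qed

locale idempotent_cancellative_semiring =
  fixes T :: "'a::comm_semiring_1 itself"
  assumes add_idempotent: "add_idempotent T"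
    and mult_cancellative: "mult_cancellative T"
begin

lemma add_idem [simp]: "(a::'a) + a = a"
  using add_idempotent unfolding add_idempotent_def by blast

lemma mult_cancel_right_nonzero: "(c::'a) \<noteq> 0 \<Longrightarrow> a * c = b * c \<longleftrightarrow> a = b"
  using mult_cancellative unfolding mult_cancellative_def by blast

lemma mult_eq_zero_iff: "(a::'a) * b = 0 \<longleftrightarrow> a = 0 \<or> b = 0"
  using mult_cancel_right_nonzero[of b a 0] by auto

lemma add_eq_zero_iff: "(a::'a) + b = 0 \<longleftrightarrow> a = 0 \<and> b = 0"
proof
  assume sum: "a + b = 0"
  have "a = a + (a + b)" using sum by simp
  also have "\<dots> = (a + a) + b" by (rule add.assoc[symmetric])
  also have "\<dots> = 0" using sum by simp
  finally have "a = 0" .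
  with sum show "a = 0 \<and> b = 0" by simp
qed simp

lemma separating_perturbation_off_cross:
  fixes A B :: "'a mat"
  assumes A: "A \<in> carrier_mat m n" and B: "B \<in> carrier_mat m n"
    and rank_A: "mrank A = 1" and rank_B: "mrank B = 1"
    and kl: "k < m" "l < n" and not_below: "A $$ (k,l) + B $$ (k,l) \<noteq> B $$ (k,l)"
    and kl': "k' < m" "l' < n" "k' \<noteq> k" "l' \<noteq> l" "B $$ (k',l') \<noteq> 0"
  shows "\<exists>C \<in> carrier_mat m n. mrank (A + C) = 1 \<and> mrank (B + C) = 2"
proof -
  define a where "a = A $$ (k,l)"
  define C where "C = mat m n (\<lambda>(i,j). if (i,j) = (k,l) then a else 0)"
  have C: "C \<in> carrier_mat m n" by (simp add: C_def)
  have "A + C = A"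
    using A kl by (intro eq_matI) (auto simp: C_def a_def)
  then have rank_AC: "mrank (A + C) = 1" using rank_A by simp
  obtain u v where B_uv: "\<forall>i<m. \<forall>j<n. B $$ (i,j) = u i * v j"
    using rank_B mrank_eq_1_iff[OF B] by blast
  have BC: "B + C \<in> carrier_mat m n" using B C by simp
  have "mrank (B + C) = 2"
  proof (rule mrank_eq_2I[OF BC _ kl(1) kl'(1) kl(2) kl'(2)])
    show "\<forall>i<m. \<forall>j<n. (B + C) $$ (i,j) =
        u i * v j + (if i = k then a else 0) * (if j = l then 1 else 0)"
      using B_uv by (simp add: C_def)
    have "B $$ (k,l') * B $$ (k',l) = B $$ (k,l) * B $$ (k',l')"
      using mrank_eq_1_minor[OF B rank_B kl(1) kl'(1) kl(2) kl'(2)] by simp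
    moreover have "(B $$ (k,l) + a) * B $$ (k',l') \<noteq> B $$ (k,l) * B $$ (k',l')"
      using not_below kl'(5) by (simp add: mult_cancel_right_nonzero a_def add.commute)
    ultimately show "(B + C) $$ (k,l) * (B + C) $$ (k',l') \<noteq> (B + C) $$ (k,l') * (B + C) $$ (k',l)"
      using kl kl' by (simp add: C_def)
  qed
  with C rank_AC show ?thesis by blast
qed

lemma separating_perturbation_row_spread:
  fixes A B :: "'a mat"
  assumes A: "A \<in> carrier_mat m n" and B: "B \<in> carrier_mat m n" and rank_A: "mrank A = 1"
    and kl: "k < m" "l < n" and not_below: "A $$ (k,l) + B $$ (k,l) \<noteq> B $$ (k,l)"
    and B_row: "\<forall>i<m. \<forall>j<n. i \<noteq> k \<longrightarrow> B $$ (i,j) = 0"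
    and k': "k' < m" "k' \<noteq> k" and j: "j < n" "j \<noteq> l" "A $$ (k,j) \<noteq> 0"
  shows "\<exists>C \<in> carrier_mat m n. mrank (A + C) = 1 \<and> mrank (B + C) = 2"
proof -
  obtain x y where A_xy: "\<forall>i<m. \<forall>j<n. A $$ (i,j) = x i * y j"
    using rank_A mrank_eq_1_iff[OF A] by blast
  \<comment> \<open>at most one of the two choices of c makes the minor below degenerate\<close>
  obtain c where c: "c = 0 \<or> c = A $$ (k,l)"
    and minor: "(B $$ (k,l) + c) * A $$ (k,j) \<noteq> B $$ (k,j) * A $$ (k,l)"
  proof (cases "B $$ (k,l) * A $$ (k,j) = B $$ (k,j) * A $$ (k,l)")
    case True
    have "(B $$ (k,l) + A $$ (k,l)) * A $$ (k,j) \<noteq> B $$ (k,l) * A $$ (k,j)"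
      using not_below j(3) by (simp add: mult_cancel_right_nonzero add.commute)
    with True that[of "A $$ (k,l)"] show ?thesis by simp
  qed (use that[of 0] in simp)
  define C where
    "C = mat m n (\<lambda>(i,j). (if i = k' then A $$ (k,j) else 0) + (if (i,j) = (k,l) then c else 0))"
  have C: "C \<in> carrier_mat m n" by (simp add: C_def)
  have "A $$ (k,l) + c = A $$ (k,l)" using c by auto
  then have AC_kl: "(A + C) $$ (k,l) = A $$ (k,l)" using A kl k' by (simp add: C_def)
  have "mrank (A + C) = 1"
  proof (rule mrank_eq_1I[of _ m n "\<lambda>i. x i + (if i = k' then x k else 0)" y k l])
    show "\<forall>i<m. \<forall>j<n. (A + C) $$ (i,j) = (x i + (if i = k' then x k else 0)) * y j"
      using A kl k' AC_kl A_xy by (auto simp: C_def distrib_right)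
    show "(A + C) $$ (k,l) \<noteq> 0" using AC_kl not_below by auto
  qed (use A C kl in auto)
  moreover have "mrank (B + C) = 2"
  proof (rule mrank_eq_2I[of _ m n
        "\<lambda>i. if i = k then 1 else 0" "\<lambda>j. B $$ (k,j) + (if j = l then c else 0)"
        "\<lambda>i. if i = k' then 1 else 0" "\<lambda>j. A $$ (k,j)" k k' l j])
    show "\<forall>i<m. \<forall>j<n. (B + C) $$ (i,j) =
        (if i = k then 1 else 0) * (B $$ (k,j) + (if j = l then c else 0))
        + (if i = k' then 1 else 0) * A $$ (k,j)"
      using B B_row k' by (auto simp: C_def)
    show "(B + C) $$ (k,l) * (B + C) $$ (k',j) \<noteq> (B + C) $$ (k,j) * (B + C) $$ (k',l)"
      using B B_row kl k' j minor by (simp add: C_def)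
  qed (use B C kl k' j in auto)
  ultimately show ?thesis using C by blast
qed

lemma separating_perturbation_col_spread:
  fixes A B :: "'a mat"
  assumes A: "A \<in> carrier_mat m n" and B: "B \<in> carrier_mat m n" and rank_A: "mrank A = 1"
    and kl: "k < m" "l < n" and not_below: "A $$ (k,l) + B $$ (k,l) \<noteq> B $$ (k,l)"
    and B_row: "\<forall>i<m. \<forall>j<n. i \<noteq> k \<longrightarrow> B $$ (i,j) = 0"
    and l': "l' < n" "l' \<noteq> l" and i: "i < m" "i \<noteq> k" "A $$ (i,l) \<noteq> 0"
  shows "\<exists>C \<in> carrier_mat m n. mrank (A + C) = 1 \<and> mrank (B + C) = 2"
proof -
  obtain x y where A_xy: "\<forall>i<m. \<forall>j<n. A $$ (i,j) = x i * y j"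
    using rank_A mrank_eq_1_iff[OF A] by blast
  define a where "a = A $$ (k,l)"
  have a: "a \<noteq> 0" using not_below by (auto simp: a_def)
  define C where
    "C = mat m n (\<lambda>(i,j). (if j = l' then A $$ (i,l) else 0) + (if (i,j) = (k,l) then a else 0))"
  have C: "C \<in> carrier_mat m n" by (simp add: C_def)
  have AC_kl: "(A + C) $$ (k,l) = a" using A kl l' by (simp add: C_def a_def)
  have "mrank (A + C) = 1"
  proof (rule mrank_eq_1I[of _ m n x "\<lambda>j. y j + (if j = l' then y l else 0)" k l])
    show "\<forall>i<m. \<forall>j<n. (A + C) $$ (i,j) = x i * (y j + (if j = l' then y l else 0))"
      using A kl l' AC_kl A_xy by (auto simp: C_def a_def distrib_left)
  qed (use A C kl AC_kl a in auto)
  moreover have "mrank (B + C) = 2"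
  proof (rule mrank_eq_2I[of _ m n
        "\<lambda>i. if i = k then 1 else 0" "\<lambda>j. B $$ (k,j) + (if j = l then a else 0)"
        "\<lambda>i. A $$ (i,l)" "\<lambda>j. if j = l' then 1 else 0" k i l l'])
    show "\<forall>i<m. \<forall>j<n. (B + C) $$ (i,j) =
        (if i = k then 1 else 0) * (B $$ (k,j) + (if j = l then a else 0))
        + A $$ (i,l) * (if j = l' then 1 else 0)"
      using B B_row l' by (auto simp: C_def)
    have "(B $$ (k,l) + a) * A $$ (i,l) \<noteq> 0"
      using a i(3) by (simp add: mult_eq_zero_iff add_eq_zero_iff)
    then show "(B + C) $$ (k,l) * (B + C) $$ (i,l') \<noteq> (B + C) $$ (k,l') * (B + C) $$ (i,l)"
      using B B_row kl l' i by (simp add: C_def)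
  qed (use B C kl l' i in auto)
  ultimately show ?thesis using C by blast
qed

lemma separating_perturbation_single_entry:
  fixes A B :: "'a mat"
  assumes A: "A \<in> carrier_mat m n" and B: "B \<in> carrier_mat m n"
    and kl: "k < m" "l < n" and not_below: "A $$ (k,l) + B $$ (k,l) \<noteq> B $$ (k,l)"
    and B_row: "\<forall>i<m. \<forall>j<n. i \<noteq> k \<longrightarrow> B $$ (i,j) = 0"
    and A_single: "\<forall>i<m. \<forall>j<n. (i,j) \<noteq> (k,l) \<longrightarrow> A $$ (i,j) = 0"
    and kl': "k' < m" "k' \<noteq> k" "l' < n" "l' \<noteq> l"
  shows "\<exists>C \<in> carrier_mat m n. mrank (A + C) = 1 \<and> mrank (B + C) = 2"
proof -
  define a where "a = A $$ (k,l)"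
  have a: "a \<noteq> 0" using not_below by (auto simp: a_def)
  obtain c where c: "c = 0 \<or> c = a"
    and minor: "B $$ (k,l) * c \<noteq> (B $$ (k,l') + c) * a"
  proof (cases "B $$ (k,l') = 0")
    case True
    have "B $$ (k,l) \<noteq> a" using not_below by (auto simp: a_def)
    then have "B $$ (k,l) * a \<noteq> (B $$ (k,l') + a) * a"
      using True a by (simp add: mult_cancel_right_nonzero)
    with that[of a] show ?thesis by simp
  next
    case False
    with a that[of 0] show ?thesis by (simp add: mult_eq_zero_iff)
  qed
  define C where "C = mat m n (\<lambda>(i,j). if i = k' \<and> j = l then a
    else if (i = k \<or> i = k') \<and> j = l' then c else 0)"
  have C: "C \<in> carrier_mat m n" by (simp add: C_def)
  have AC_kl: "(A + C) $$ (k,l) = a" using A kl kl' by (simp add: C_def a_def)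
  have "mrank (A + C) = 1"
  proof (rule mrank_eq_1I[of _ m n "\<lambda>i. if i = k \<or> i = k' then 1 else 0"
        "\<lambda>j. if j = l then a else if j = l' then c else 0" k l])
    show "\<forall>i<m. \<forall>j<n. (A + C) $$ (i,j) =
        (if i = k \<or> i = k' then 1 else 0) * (if j = l then a else if j = l' then c else 0)"
      using A A_single kl kl' by (auto simp: C_def a_def)
  qed (use A C kl AC_kl a in auto)
  moreover have "mrank (B + C) = 2"
  proof (rule mrank_eq_2I[of _ m n
        "\<lambda>i. if i = k then 1 else 0" "\<lambda>j. B $$ (k,j) + (if j = l' then c else 0)"
        "\<lambda>i. if i = k' then 1 else 0" "\<lambda>j. if j = l then a else if j = l' then c else 0" k k' l l'])
    show "\<forall>i<m. \<forall>j<n. (B + C) $$ (i,j) =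
        (if i = k then 1 else 0) * (B $$ (k,j) + (if j = l' then c else 0))
        + (if i = k' then 1 else 0) * (if j = l then a else if j = l' then c else 0)"
      using B B_row kl' by (auto simp: C_def)
    show "(B + C) $$ (k,l) * (B + C) $$ (k',l') \<noteq> (B + C) $$ (k,l') * (B + C) $$ (k',l)"
      using B B_row kl kl' minor by (simp add: C_def)
  qed (use B C kl kl' in auto)
  ultimately show ?thesis using C by blast
qed

lemma separating_perturbation_row_supported:
  fixes A B :: "'a mat"
  assumes m: "1 < m" and n: "1 < n"
    and A: "A \<in> carrier_mat m n" and B: "B \<in> carrier_mat m n" and rank_A: "mrank A = 1"
    and kl: "k < m" "l < n" and not_below: "A $$ (k,l) + B $$ (k,l) \<noteq> B $$ (k,l)"
    and B_row: "\<forall>i<m. \<forall>j<n. i \<noteq> k \<longrightarrow> B $$ (i,j) = 0"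
  shows "\<exists>C \<in> carrier_mat m n. mrank (A + C) = 1 \<and> mrank (B + C) = 2"
proof -
  obtain k' where k': "k' < m" "k' \<noteq> k"
    using m by (metis One_nat_def less_one nat_neq_iff zero_less_one less_trans)
  obtain l' where l': "l' < n" "l' \<noteq> l"
    using n by (metis One_nat_def less_one nat_neq_iff zero_less_one less_trans)
  consider (row_spread) j where "j < n" "j \<noteq> l" "A $$ (k,j) \<noteq> 0"
    | (col_spread) i where "i < m" "i \<noteq> k" "A $$ (i,l) \<noteq> 0"
    | (single) "\<forall>j<n. j \<noteq> l \<longrightarrow> A $$ (k,j) = 0" "\<forall>i<m. i \<noteq> k \<longrightarrow> A $$ (i,l) = 0"
    by blast
  then show ?thesis
  proof cases
    case row_spread
    then show ?thesis
      using separating_perturbation_row_spread[OF A B rank_A kl not_below B_row k'] by blast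
  next
    case col_spread
    then show ?thesis
      using separating_perturbation_col_spread[OF A B rank_A kl not_below B_row l'] by blast
  next
    case single
    have "A $$ (i,j) = 0" if ij: "i < m" "j < n" "(i,j) \<noteq> (k,l)" for i j
    proof (cases "i = k \<or> j = l")
      case False
      have "A $$ (i,j) * A $$ (k,l) = A $$ (i,l) * A $$ (k,j)"
        using mrank_eq_1_minor[OF A rank_A ij(1) kl(1) ij(2) kl(2)] .
      also have "\<dots> = 0" using single False ij by simp
      finally have "A $$ (i,j) * A $$ (k,l) = 0" .
      moreover have "A $$ (k,l) \<noteq> 0" using not_below by auto
      ultimately show ?thesis by (simp add: mult_eq_zero_iff)
    qed (use single ij in auto)
    then show ?thesis
      using separating_perturbation_single_entry[OF A B kl not_below B_row _ k' l'] by blast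
  qed
qed

lemma mrank_eq_1_row_or_col_supported:
  fixes M :: "'a mat"
  assumes M: "M \<in> carrier_mat m n" and rank_M: "mrank M = 1" and kl: "k < m" "l < n"
    and cross: "\<forall>i<m. \<forall>j<n. i \<noteq> k \<longrightarrow> j \<noteq> l \<longrightarrow> M $$ (i,j) = 0"
  shows "(\<forall>i<m. \<forall>j<n. i \<noteq> k \<longrightarrow> M $$ (i,j) = 0) \<or> (\<forall>i<m. \<forall>j<n. j \<noteq> l \<longrightarrow> M $$ (i,j) = 0)"
proof (rule ccontr)
  assume "\<not> ?thesis"
  then obtain i j i' j' where ij: "i < m" "j < n" "i \<noteq> k" "M $$ (i,j) \<noteq> 0"
    and ij': "i' < m" "j' < n" "j' \<noteq> l" "M $$ (i',j') \<noteq> 0"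
    by blast
  have "M $$ (i,j) * M $$ (i',j') = M $$ (i,j') * M $$ (i',j)"
    using mrank_eq_1_minor[OF M rank_M ij(1) ij'(1) ij(2) ij'(2)] .
  also have "\<dots> = 0" using cross ij ij' by simp
  finally show False using ij(4) ij'(4) by (simp add: mult_eq_zero_iff)
qed

lemma exists_separating_perturbation:
  fixes A B :: "'a mat"
  assumes m: "1 < m" and n: "1 < n"
    and A: "A \<in> carrier_mat m n" and B: "B \<in> carrier_mat m n"
    and rank_A: "mrank A = 1" and rank_B: "mrank B = 1" and not_below: "A + B \<noteq> B"
  shows "\<exists>C \<in> carrier_mat m n. mrank (A + C) = 1 \<and> mrank (B + C) = 2"
proof -
  have "\<exists>k<m. \<exists>l<n. A $$ (k,l) + B $$ (k,l) \<noteq> B $$ (k,l)"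
  proof (rule ccontr)
    assume "\<not> ?thesis"
    then have "A + B = B" using A B by (intro eq_matI) auto
    with not_below show False ..
  qed
  then obtain k l where kl: "k < m" "l < n" and not_below_kl: "A $$ (k,l) + B $$ (k,l) \<noteq> B $$ (k,l)"
    by blast
  show ?thesis
  proof (cases "\<exists>k'<m. \<exists>l'<n. k' \<noteq> k \<and> l' \<noteq> l \<and> B $$ (k',l') \<noteq> 0")
    case True
    then show ?thesis
      using separating_perturbation_off_cross[OF A B rank_A rank_B kl not_below_kl] by blast
  next
    case False
    then consider "\<forall>i<m. \<forall>j<n. i \<noteq> k \<longrightarrow> B $$ (i,j) = 0" | "\<forall>i<m. \<forall>j<n. j \<noteq> l \<longrightarrow> B $$ (i,j) = 0"
      using mrank_eq_1_row_or_col_supported[OF B rank_B kl] by blast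
    then show ?thesis
    proof cases
      case 1
      then show ?thesis
        using separating_perturbation_row_supported[OF m n A B rank_A kl not_below_kl] by blast
    next
      case 2
      have A_T: "A\<^sup>T \<in> carrier_mat n m" and B_T: "B\<^sup>T \<in> carrier_mat n m"
        using A B by simp_all
      have rank_A_T: "mrank A\<^sup>T = 1" using rank_A by (simp add: mrank_transpose)
      have "A\<^sup>T $$ (l,k) + B\<^sup>T $$ (l,k) \<noteq> B\<^sup>T $$ (l,k)" using A B kl not_below_kl by simp
      moreover have "\<forall>i<n. \<forall>j<m. i \<noteq> l \<longrightarrow> B\<^sup>T $$ (i,j) = 0" using B 2 by simp
      ultimately obtain C' where C': "C' \<in> carrier_mat n m"
        and ranks: "mrank (A\<^sup>T + C') = 1" "mrank (B\<^sup>T + C') = 2"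
        using separating_perturbation_row_supported[OF n m A_T B_T rank_A_T kl(2) kl(1)] by blast
      have "A + C'\<^sup>T = (A\<^sup>T + C')\<^sup>T" "B + C'\<^sup>T = (B\<^sup>T + C')\<^sup>T"
        using A B C' by (simp_all add: transpose_add)
      then show ?thesis
        using ranks C' by (intro bexI[of _ "C'\<^sup>T"]) (simp_all add: mrank_transpose)
    qed
  qed
qed

end

theorem lemma4p1:
  fixes A B :: "'a::comm_semiring_1 mat" and m n :: nat
  assumes "add_idempotent TYPE('a)"
    and "mult_cancellative TYPE('a)"
    and "add_unit_irreducible TYPE('a)"
    and "m > 1" and "n > 1"
    and "A \<in> carrier_mat m n" and "B \<in> carrier_mat m n"
    and "A \<noteq> B"
    and "mrank A = 1" and "mrank B = 1"
  shows "(nnz A > nnz B \<longrightarrow>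
            (\<exists>C \<in> carrier_mat m n. mrank (A + C) = 1 \<and> mrank (B + C) = 2))
       \<and> (nnz A = nnz B \<longrightarrow>
            (\<exists>C \<in> carrier_mat m n. (mrank (A + C) = 1 \<and> mrank (B + C) = 2) \<or>
                                   (mrank (A + C) = 2 \<and> mrank (B + C) = 1)))"
proof -
  interpret idempotent_cancellative_semiring "TYPE('a)"
    using assms(1,2) by unfold_locales
  note A = assms(6) and B = assms(7)
  note separate = exists_separating_perturbation[OF assms(4,5)]
  show ?thesis
  proof (intro conjI impI)
    assume "nnz A > nnz B"
    then have "A + B \<noteq> B" using nnz_le_if_add_eq[OF A B] by fastforce
    then show "\<exists>C \<in> carrier_mat m n. mrank (A + C) = 1 \<and> mrank (B + C) = 2"
      using separate[OF A B assms(9,10)] by blast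
  next
    have "A + B \<noteq> B \<or> B + A \<noteq> A" using assms(8) comm_add_mat[OF A B] by auto
    then show "\<exists>C \<in> carrier_mat m n. (mrank (A + C) = 1 \<and> mrank (B + C) = 2) \<or>
                                   (mrank (A + C) = 2 \<and> mrank (B + C) = 1)"
      using separate[OF A B assms(9,10)] separate[OF B A assms(10,9)] by blast
  qed
qed

end
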